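(* Let $\mathcal{W}=\{W_s:s\in\mathcal{S}\}$ be an arbitrarily varying channel with channel state sequence known at the receiver (AVC-CSR), with finite alphabets $\mathcal{X},\mathcal{Y}$ and finite state set $\mathcal{S}$. The capacity $C^{CSR-DC}(\mathcal{W})$ of deterministic code with respect to the maximal decoding error probability is positive if and only if there exist $x,x'\in\mathcal{X}$ such that for every state $s\in\mathcal{S}$ there exists $y\in\mathcal{Y}$ with $W_s(y|x)\neq W_s(y|x')$.
   Context: For an AVC-CSR, $W(y^N|x^N,s^N)=\prod_{i=1}^NW_{s_i}(y_i|x_i)$; the state sequence $s^N\in\mathcal{S}^N$ is arbitrary, unknown to the transmitter and known to the receiver. A deterministic code of length $N$ is a pair $(f,\phi)$, $f:\mathcal{M}\to\mathcal{X}^N$, $\phi:\mathcal{Y}^N\times\mathcal{S}^N\to\mathcal{M}$, with maximal decoding error $\lambda^{CSR}(\mathcal{W},f,\phi)=\max_{s^N\in\mathcal{S}^N}\max_{m\in\mathcal{M}}\big[1-\sum_{y^N:\phi(y^N,s^N)=m}W(y^N|f(m),s^N)\big]$. $C^{CSR-DC}(\mathcal{W})$ is the supremum of $R\ge0$ such that for every $\epsilon>0$ and all sufficiently large $N$ there is a deterministic code with $\frac1N\log|\mathcal{M}|>R-\epsilon$ and $\lambda^{CSR}(\mathcal{W},f,\phi)<\epsilon$. *)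

theory Defs
  imports "HOL-Analysis.Analysis" "HOL-Library.Extended_Real"
begin

text \<open>An AVC-CSR with finite input alphabet 'x, output alphabet 'y and finite state set 's
  is a family of stochastic matrices W s x y = W_s(y|x).\<close>

definition stochastic_family :: "('s \<Rightarrow> 'x \<Rightarrow> 'y::finite \<Rightarrow> real) \<Rightarrow> bool" where
  "stochastic_family W \<longleftrightarrow> (\<forall>s x y. W s x y \<ge> 0) \<and> (\<forall>s x. (\<Sum>y\<in>UNIV. W s x y) = 1)"

abbreviation words :: "nat \<Rightarrow> (nat \<Rightarrow> 'a) set" where
  "words N \<equiv> PiE {..<N} (\<lambda>_. UNIV)"

definition prod_channel :: "('s \<Rightarrow> 'x \<Rightarrow> 'y \<Rightarrow> real) \<Rightarrow> nat \<Rightarrow>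
    (nat \<Rightarrow> 'y) \<Rightarrow> (nat \<Rightarrow> 'x) \<Rightarrow> (nat \<Rightarrow> 's) \<Rightarrow> real" where
  "prod_channel W N y x s = (\<Prod>i<N. W (s i) (x i) (y i))"

definition csr_max_error :: "('s::finite \<Rightarrow> 'x \<Rightarrow> 'y::finite \<Rightarrow> real) \<Rightarrow> nat \<Rightarrow> nat \<Rightarrow>
    (nat \<Rightarrow> nat \<Rightarrow> 'x) \<Rightarrow> ((nat \<Rightarrow> 'y) \<Rightarrow> (nat \<Rightarrow> 's) \<Rightarrow> nat) \<Rightarrow> real" where
  "csr_max_error W N K f phi =
     Max ((\<lambda>(s, m). 1 - (\<Sum>y\<in>{y\<in>words N. phi y s = m}. prod_channel W N y (f m) s))
          ` (words N \<times> {..<K}))"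

definition csr_dc_achievable :: "('s::finite \<Rightarrow> 'x \<Rightarrow> 'y::finite \<Rightarrow> real) \<Rightarrow> real \<Rightarrow> bool" where
  "csr_dc_achievable W R \<longleftrightarrow>
     (\<forall>eps>0. \<exists>N0. \<forall>N\<ge>N0. \<exists>K f phi. K \<ge> 1 \<and>
        f ` {..<K} \<subseteq> words N \<and>
        log 2 (real K) / real N > R - eps \<and>
        csr_max_error W N K f phi < eps)"

definition C_CSR_DC :: "('s::finite \<Rightarrow> 'x \<Rightarrow> 'y::finite \<Rightarrow> real) \<Rightarrow> ereal" where
  "C_CSR_DC W = Sup (ereal ` {R. R \<ge> 0 \<and> csr_dc_achievable W R})"

end

theory Submission
  imports Defs
begin

(* If every pair of inputs is confusable in some state, the jammer chooses, letter by letter,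
   states under which the codewords of two messages induce the same output distribution; one of
   the two messages is then decoded wrongly with probability at least 1/2, so no positive rate
   is achievable.
   Conversely, if x and x' are distinguishable in every state, their Bhattacharyya coefficient is
   at most some \<beta> < 1 uniformly in the state. For codewords over {x, x'} the Bhattacharyya
   coefficient of the output distributions of two codewords is then at most \<beta>^d, d their Hamming
   distance, whatever the state sequence; and maximum-likelihood decoding (the receiver knows the
   states) errs with probability at most the sum of these coefficients over the competing
   codewords. A greedy Gilbert-Varshamov choice yields exponentially many binary codewords with
   exponentially small pairwise coefficients, hence a positive rate. *)

lemma sum_words_prod:
  fixes h :: "nat \<Rightarrow> 'y::finite \<Rightarrow> 'c::comm_semiring_1"
  shows "(\<Sum>y\<in>words N. \<Prod>i<N. h i (y i)) = (\<Prod>i<N. \<Sum>t\<in>UNIV. h i t)"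
  by (subst prod_sum_PiE) auto

lemma finite_words: "finite (words N :: (nat \<Rightarrow> 'a::finite) set)"
  by (simp add: finite_PiE)

lemma real_sqrt_prod: "sqrt (prod f A) = (\<Prod>i\<in>A. sqrt (f i))"
  by (induct A rule: infinite_finite_induct) (auto simp: real_sqrt_mult)

lemma arg_max_on_finite:
  fixes f :: "'a \<Rightarrow> 'b::linorder"
  assumes "finite S" "S \<noteq> {}"
  shows "arg_max_on f S \<in> S \<and> (\<forall>y\<in>S. f y \<le> f (arg_max_on f S))"
proof -
  obtain x where x: "x \<in> S" "\<forall>y\<in>S. f y \<le> f x"
    using Max_in[of "f ` S"] Max_ge[of "f ` S"] assms by fastforce
  show ?thesis
    unfolding arg_max_on_def by (rule arg_maxI[where f = f]) (use x in \<open>auto simp: not_less\<close>)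
qed

lemma real_sqrt_mult_less_mean:
  fixes p q :: real
  assumes "p \<ge> 0" "q \<ge> 0"
  shows "sqrt (p * q) \<le> (p + q) / 2" and "p \<noteq> q \<Longrightarrow> sqrt (p * q) < (p + q) / 2"
proof -
  have gap: "(p + q) / 2 - sqrt (p * q) = (sqrt p - sqrt q)\<^sup>2 / 2"
    using assms by (simp add: real_sqrt_mult power2_eq_square algebra_simps)
  then show "sqrt (p * q) \<le> (p + q) / 2"
    using zero_le_power2[of "sqrt p - sqrt q"] by linarith
  assume "p \<noteq> q"
  then have "(sqrt p - sqrt q)\<^sup>2 > 0" by simp
  then show "sqrt (p * q) < (p + q) / 2" using gap by linarith
qed

definition bhattacharyya :: "('y::finite \<Rightarrow> real) \<Rightarrow> ('y \<Rightarrow> real) \<Rightarrow> real" where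
  "bhattacharyya P Q = (\<Sum>y\<in>UNIV. sqrt (P y * Q y))"

lemma bhattacharyya_commute: "bhattacharyya P Q = bhattacharyya Q P"
  unfolding bhattacharyya_def by (simp add: mult.commute)

lemma bhattacharyya_nonneg:
  assumes "\<And>y. P y \<ge> 0" "\<And>y. Q y \<ge> 0"
  shows "bhattacharyya P Q \<ge> 0"
  unfolding bhattacharyya_def by (intro sum_nonneg real_sqrt_ge_zero mult_nonneg_nonneg assms)

lemma bhattacharyya_self:
  assumes "\<And>y. P y \<ge> 0" "sum P UNIV = 1"
  shows "bhattacharyya P P = 1"
  using assms unfolding bhattacharyya_def by simp

lemma bhattacharyya_less_one:
  assumes "\<And>y. P y \<ge> 0" "\<And>y. Q y \<ge> 0" "sum P UNIV = 1" "sum Q UNIV = 1" and "P \<noteq> Q"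
  shows "bhattacharyya P Q < 1"
proof -
  obtain y where "P y \<noteq> Q y" using \<open>P \<noteq> Q\<close> by blast
  then have "bhattacharyya P Q < (\<Sum>t\<in>UNIV. (P t + Q t) / 2)"
    unfolding bhattacharyya_def using real_sqrt_mult_less_mean[OF assms(1,2)]
    by (intro sum_strict_mono_ex1) (simp | blast)+
  also have "\<dots> = 1"
    using assms(3,4) by (simp add: sum.distrib sum_divide_distrib[symmetric])
  finally show ?thesis .
qed

lemma prod_channel_nonneg:
  "stochastic_family W \<Longrightarrow> prod_channel W N y c s \<ge> 0"
  unfolding stochastic_family_def prod_channel_def by (auto intro: prod_nonneg)

lemma sum_prod_channel:
  fixes W :: "'s \<Rightarrow> 'x \<Rightarrow> 'y::finite \<Rightarrow> real"
  assumes "stochastic_family W"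
  shows "(\<Sum>y\<in>words N. prod_channel W N y c s) = 1"
  using assms unfolding prod_channel_def stochastic_family_def
  by (simp add: sum_words_prod[of "\<lambda>i t. W (s i) (c i) t"])

lemma bhattacharyya_prod_channel:
  fixes W :: "'s \<Rightarrow> 'x \<Rightarrow> 'y::finite \<Rightarrow> real"
  shows "(\<Sum>y\<in>words N. sqrt (prod_channel W N y c s * prod_channel W N y c' s))
       = (\<Prod>i<N. bhattacharyya (W (s i) (c i)) (W (s i) (c' i)))"
  unfolding prod_channel_def bhattacharyya_def
  by (simp add: prod.distrib[symmetric] real_sqrt_prod
      sum_words_prod[of "\<lambda>i t. sqrt (W (s i) (c i) t * W (s i) (c' i) t)"])

definition ml_decoder :: "(nat \<Rightarrow> 'a \<Rightarrow> real) \<Rightarrow> nat \<Rightarrow> 'a \<Rightarrow> nat" where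
  "ml_decoder P K y = arg_max_on (\<lambda>m. P m y) {..<K}"

lemma ml_decoder_is_max:
  assumes "K \<ge> 1"
  shows "ml_decoder P K y < K \<and> (\<forall>m<K. P m y \<le> P (ml_decoder P K y) y)"
  using arg_max_on_finite[of "{..<K}" "\<lambda>m. P m y"] assms
  unfolding ml_decoder_def by (auto simp: lessThan_empty_iff)

lemma ml_decoder_error_le:
  fixes P :: "nat \<Rightarrow> 'a \<Rightarrow> real"
  assumes fin: "finite A" and nonneg: "\<And>k y. P k y \<ge> 0" and total: "sum (P m) A = 1"
    and m: "m < K"
  shows "1 - (\<Sum>y\<in>{y\<in>A. ml_decoder P K y = m}. P m y)
           \<le> (\<Sum>m'\<in>{..<K} - {m}. \<Sum>y\<in>A. sqrt (P m y * P m' y))"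
proof -
  define D where "D = {y\<in>A. ml_decoder P K y = m}"
  have "1 = sum (P m) (A - D) + sum (P m) D"
    unfolding total[symmetric] by (rule sum.subset_diff) (auto simp: D_def fin)
  then have error: "1 - sum (P m) D = sum (P m) (A - D)" by simp
  have "P m y \<le> (\<Sum>m'\<in>{..<K} - {m}. sqrt (P m y * P m' y))" if "y \<in> A - D" for y
  proof -
    define m0 where "m0 = ml_decoder P K y"
    have "m0 < K" "P m y \<le> P m0 y" "m0 \<noteq> m"
      using ml_decoder_is_max[of K P y] m that unfolding m0_def D_def by auto
    \<comment> \<open>the decoded message beats m, so P m y \<le> sqrt (P m y * P m0 y)\<close>
    have "P m y = sqrt (P m y * P m y)" using nonneg by (simp add: real_sqrt_mult)
    also have "\<dots> \<le> sqrt (P m y * P m0 y)"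
      using \<open>P m y \<le> P m0 y\<close> nonneg by (intro real_sqrt_le_mono mult_left_mono) auto
    also have "\<dots> \<le> (\<Sum>m'\<in>{..<K} - {m}. sqrt (P m y * P m' y))"
      by (rule member_le_sum) (use \<open>m0 < K\<close> \<open>m0 \<noteq> m\<close> nonneg in auto)
    finally show ?thesis .
  qed
  then have "sum (P m) (A - D) \<le> (\<Sum>y\<in>A - D. \<Sum>m'\<in>{..<K} - {m}. sqrt (P m y * P m' y))"
    by (rule sum_mono)
  also have "\<dots> \<le> (\<Sum>y\<in>A. \<Sum>m'\<in>{..<K} - {m}. sqrt (P m y * P m' y))"
    using nonneg by (intro sum_mono2 fin sum_nonneg real_sqrt_ge_zero mult_nonneg_nonneg) auto
  also have "\<dots> = (\<Sum>m'\<in>{..<K} - {m}. \<Sum>y\<in>A. sqrt (P m y * P m' y))"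
    by (rule sum.swap)
  finally show ?thesis using error unfolding D_def by linarith
qed

lemma csr_max_error_ge:
  assumes "s \<in> words N" "m < K"
  shows "1 - (\<Sum>y\<in>{y\<in>words N. phi y s = m}. prod_channel W N y (f m) s)
           \<le> csr_max_error W N K f phi"
proof -
  let ?e = "\<lambda>(s, m). 1 - (\<Sum>y\<in>{y\<in>words N. phi y s = m}. prod_channel W N y (f m) s)"
  have "?e (s, m) \<le> Max (?e ` (words N \<times> {..<K}))"
    using assms by (intro Max_ge finite_imageI finite_cartesian_product finite_words finite_lessThan
        imageI) auto
  then show ?thesis unfolding csr_max_error_def by simp
qed

lemma csr_max_error_le:
  assumes "K \<ge> 1"
    and "\<And>s m. s \<in> words N \<Longrightarrow> m < K \<Longrightarrow>
           1 - (\<Sum>y\<in>{y\<in>words N. phi y s = m}. prod_channel W N y (f m) s) \<le> c"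
  shows "csr_max_error W N K f phi \<le> c"
proof -
  have "words N \<noteq> {}" by (simp add: PiE_eq_empty_iff)
  then show ?thesis
    unfolding csr_max_error_def using assms
    by (intro Max.boundedI finite_imageI finite_cartesian_product finite_words finite_lessThan)
       (auto simp: lessThan_empty_iff)
qed

lemma csr_max_error_ml_decoder_le:
  fixes W :: "'s::finite \<Rightarrow> 'x \<Rightarrow> 'y::finite \<Rightarrow> real"
  assumes stoch: "stochastic_family W" and "K \<ge> 1"
    and overlap: "\<And>s m m'. m < K \<Longrightarrow> m' < K \<Longrightarrow> m \<noteq> m' \<Longrightarrow>
      (\<Sum>y\<in>words N. sqrt (prod_channel W N y (f m) s * prod_channel W N y (f m') s)) \<le> \<theta>"
  shows "csr_max_error W N K f (\<lambda>y s. ml_decoder (\<lambda>m y. prod_channel W N y (f m) s) K y)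
           \<le> real (K - 1) * \<theta>"
proof (rule csr_max_error_le[OF \<open>K \<ge> 1\<close>])
  fix s m assume "m < K"
  let ?P = "\<lambda>m y. prod_channel W N y (f m) s"
  have "1 - (\<Sum>y\<in>{y\<in>words N. ml_decoder ?P K y = m}. ?P m y)
          \<le> (\<Sum>m'\<in>{..<K} - {m}. \<Sum>y\<in>words N. sqrt (?P m y * ?P m' y))"
    by (rule ml_decoder_error_le[OF finite_words prod_channel_nonneg[OF stoch]
          sum_prod_channel[OF stoch] \<open>m < K\<close>])
  also have "\<dots> \<le> (\<Sum>m'\<in>{..<K} - {m}. \<theta>)"
    using \<open>m < K\<close> by (intro sum_mono overlap) auto
  also have "\<dots> = real (K - 1) * \<theta>"
    using \<open>m < K\<close> by simp
  finally show "1 - (\<Sum>y\<in>{y\<in>words N. ml_decoder ?P K y = m}. ?P m y) \<le> real (K - 1) * \<theta>" .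
qed

lemma csr_max_error_ge_half_if_same_output:
  fixes W :: "'s::finite \<Rightarrow> 'x \<Rightarrow> 'y::finite \<Rightarrow> real"
  assumes stoch: "stochastic_family W" and "s \<in> words N" and "m < K" "m' < K" "m \<noteq> m'"
    and same_output: "\<And>y. prod_channel W N y (f m') s = prod_channel W N y (f m) s"
  shows "csr_max_error W N K f phi \<ge> 1/2"
proof -
  define P where "P = (\<lambda>y. prod_channel W N y (f m) s)"
  define D where "D = (\<lambda>k. {y\<in>words N. phi y s = k})"
  have D_words: "D k \<subseteq> words N" for k unfolding D_def by blast
  have "finite (D k)" for k using D_words finite_words by (rule finite_subset)
  moreover have "D m \<inter> D m' = {}" unfolding D_def using \<open>m \<noteq> m'\<close> by blast
  ultimately have "sum P (D m) + sum P (D m') = sum P (D m \<union> D m')"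
    by (simp add: sum.union_disjoint)
  also have "\<dots> \<le> sum P (words N)"
  proof (rule sum_mono2[OF finite_words])
    show "D m \<union> D m' \<subseteq> words N" using D_words by blast
    show "0 \<le> P y" for y unfolding P_def by (rule prod_channel_nonneg[OF stoch])
  qed
  also have "\<dots> = 1" unfolding P_def by (rule sum_prod_channel[OF stoch])
  finally have "sum P (D m) + sum P (D m') \<le> 1" .
  moreover have "1 - sum P (D m) \<le> csr_max_error W N K f phi"
    unfolding P_def D_def by (rule csr_max_error_ge[OF \<open>s \<in> words N\<close> \<open>m < K\<close>])
  moreover have "1 - sum P (D m') \<le> csr_max_error W N K f phi"
    unfolding P_def D_def same_output[symmetric]
    by (rule csr_max_error_ge[OF \<open>s \<in> words N\<close> \<open>m' < K\<close>])
  ultimately show ?thesis by linarith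
qed

lemma csr_max_error_ge_half:
  fixes W :: "'s::finite \<Rightarrow> 'x \<Rightarrow> 'y::finite \<Rightarrow> real"
  assumes stoch: "stochastic_family W" and confusable: "\<forall>x x'. \<exists>s. W s x = W s x'"
    and "K \<ge> 2"
  shows "csr_max_error W N K f phi \<ge> 1/2"
proof -
  obtain confuse where confuse: "\<And>x x'. W (confuse x x') x = W (confuse x x') x'"
    using confusable by metis
  define s where "s = restrict (\<lambda>i. confuse (f 0 i) (f 1 i)) {..<N}"
  have same_letter: "W (s i) (f 1 i) = W (s i) (f 0 i)" if "i \<in> {..<N}" for i
  proof -
    have "s i = confuse (f 0 i) (f 1 i)" using that by (simp add: s_def)
    then show ?thesis by (metis confuse)
  qed
  have "prod_channel W N y (f 1) s = prod_channel W N y (f 0) s" for y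
    unfolding prod_channel_def by (intro prod.cong refl) (metis same_letter)
  moreover have "s \<in> words N" unfolding s_def by simp
  ultimately show ?thesis
    using csr_max_error_ge_half_if_same_output[OF stoch, of s N 0 K 1] \<open>K \<ge> 2\<close> by simp
qed

lemma achievable_rate_nonpos:
  fixes W :: "'s::finite \<Rightarrow> 'x \<Rightarrow> 'y::finite \<Rightarrow> real"
  assumes stoch: "stochastic_family W" and confusable: "\<forall>x x'. \<exists>s. W s x = W s x'"
    and "csr_dc_achievable W R"
  shows "R \<le> 0"
proof (rule ccontr)
  assume "\<not> R \<le> 0"
  then have "min R (1/2) > 0" by simp
  then obtain N0 where "\<forall>N\<ge>N0. \<exists>K f phi. K \<ge> 1 \<and> f ` {..<K} \<subseteq> words N \<and>
      log 2 (real K) / real N > R - min R (1/2) \<and> csr_max_error W N K f phi < min R (1/2)"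
    using \<open>csr_dc_achievable W R\<close> unfolding csr_dc_achievable_def by blast
  then obtain K f phi where "K \<ge> 1" and rate: "log 2 (real K) / real N0 > R - min R (1/2)"
    and error: "csr_max_error W N0 K f phi < min R (1/2)"
    by blast
  show False
  proof (cases "K \<ge> 2")
    case True
    then show False
      using csr_max_error_ge_half[OF stoch confusable True, of N0 f phi] error by linarith
  next
    case False
    then have "K = 1" using \<open>K \<ge> 1\<close> by simp
    then show False using rate by simp
  qed
qed

definition hamming_kernel :: "real \<Rightarrow> nat \<Rightarrow> (nat \<Rightarrow> bool) \<Rightarrow> (nat \<Rightarrow> bool) \<Rightarrow> real" where
  "hamming_kernel \<beta> N b b' = (\<Prod>i<N. if b i = b' i then 1 else \<beta>)"

lemma hamming_kernel_nonneg: "\<beta> \<ge> 0 \<Longrightarrow> hamming_kernel \<beta> N b b' \<ge> 0"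
  unfolding hamming_kernel_def by (intro prod_nonneg) auto

lemma hamming_kernel_commute: "hamming_kernel \<beta> N b b' = hamming_kernel \<beta> N b' b"
  unfolding hamming_kernel_def by (intro prod.cong) auto

lemma hamming_kernel_self: "hamming_kernel \<beta> N b b = 1"
  unfolding hamming_kernel_def by simp

lemma sum_hamming_kernel: "(\<Sum>b'\<in>words N. hamming_kernel \<beta> N b b') = (1 + \<beta>) ^ N"
proof -
  have "(\<Sum>b'\<in>words N. hamming_kernel \<beta> N b b') = (\<Prod>i<N. \<Sum>t\<in>UNIV. if b i = t then 1 else \<beta>)"
    unfolding hamming_kernel_def by (rule sum_words_prod)
  also have "\<dots> = (\<Prod>i<N. 1 + \<beta>)"
    by (intro prod.cong refl) (auto simp: UNIV_bool)
  finally show ?thesis by simp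
qed

lemma card_hamming_kernel_gt:
  assumes "\<beta> \<ge> 0" "\<theta> > 0"
  shows "real (card {b'\<in>words N. hamming_kernel \<beta> N b b' > \<theta>}) * \<theta> \<le> (1 + \<beta>) ^ N"
proof -
  let ?B = "{b'\<in>words N. hamming_kernel \<beta> N b b' > \<theta>}"
  have "real (card ?B) * \<theta> = (\<Sum>b'\<in>?B. \<theta>)" by simp
  also have "\<dots> \<le> (\<Sum>b'\<in>?B. hamming_kernel \<beta> N b b')" by (rule sum_mono) auto
  also have "\<dots> \<le> (\<Sum>b'\<in>words N. hamming_kernel \<beta> N b b')"
    by (intro sum_mono2 finite_words hamming_kernel_nonneg[OF \<open>\<beta> \<ge> 0\<close>]) auto
  also have "\<dots> = (1 + \<beta>) ^ N" by (rule sum_hamming_kernel)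
  finally show ?thesis .
qed

lemma greedy_independent_set:
  fixes B :: "'a \<Rightarrow> 'a \<Rightarrow> bool" and V :: real
  assumes finU: "finite U" and degree: "\<And>a. a \<in> U \<Longrightarrow> real (card {b\<in>U. B a b}) \<le> V"
    and "V \<ge> 0" and refl: "\<And>a. B a a" and sym: "\<And>a b. B a b \<Longrightarrow> B b a"
  shows "real k * V < real (card U) \<Longrightarrow>
    \<exists>C\<subseteq>U. card C = Suc k \<and> (\<forall>a\<in>C. \<forall>b\<in>C. a \<noteq> b \<longrightarrow> \<not> B a b)"
proof (induction k)
  case 0
  then obtain u where "u \<in> U" by fastforce
  then show ?case by (intro exI[of _ "{u}"]) auto
next
  case (Suc k)
  have "real k * V \<le> real (Suc k) * V" using \<open>V \<ge> 0\<close> by (intro mult_right_mono) auto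
  then obtain C where C: "C \<subseteq> U" "card C = Suc k" "\<forall>a\<in>C. \<forall>b\<in>C. a \<noteq> b \<longrightarrow> \<not> B a b"
    using Suc by fastforce
  have "finite C" using finite_subset[OF C(1) finU] .
  define X where "X = (\<Union>a\<in>C. {b\<in>U. B a b})"
  \<comment> \<open>the neighbourhoods of the k + 1 chosen points cannot cover U\<close>
  have "real (card X) \<le> (\<Sum>a\<in>C. real (card {b\<in>U. B a b}))"
    unfolding X_def using card_UN_le[OF \<open>finite C\<close>, of "\<lambda>a. {b\<in>U. B a b}"]
    by (simp only: of_nat_sum[symmetric] of_nat_le_iff)
  also have "\<dots> \<le> (\<Sum>a\<in>C. V)" by (rule sum_mono) (use degree C in auto)
  also have "\<dots> < real (card U)" using C Suc.prems by simp
  finally have "card X < card U" by simp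
  moreover have "X \<subseteq> U" unfolding X_def by blast
  ultimately have "\<not> U \<subseteq> X" using card_mono[OF finite_subset[OF _ finU]] leD by metis
  then obtain u where u: "u \<in> U" "u \<notin> X" by blast
  have "u \<notin> C" using u C refl unfolding X_def by blast
  show ?case
  proof (intro exI[of _ "insert u C"] conjI)
    show "insert u C \<subseteq> U" using u C by auto
    show "card (insert u C) = Suc (Suc k)" using \<open>u \<notin> C\<close> \<open>finite C\<close> C by simp
    show "\<forall>a\<in>insert u C. \<forall>b\<in>insert u C. a \<noteq> b \<longrightarrow> \<not> B a b"
      using C u sym unfolding X_def by blast
  qed
qed

lemma exists_binary_code_hamming_kernel_le:
  assumes "\<beta> \<ge> 0" "0 < \<theta>" "\<theta> < 1" "K \<ge> 1" and count: "real (K - 1) * (1 + \<beta>) ^ N < \<theta> * 2 ^ N"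
  shows "\<exists>h. \<forall>m<K. \<forall>m'<K. m \<noteq> m' \<longrightarrow> hamming_kernel \<beta> N (h m) (h m') \<le> \<theta>"
proof -
  define B where "B = (\<lambda>b b'. hamming_kernel \<beta> N b b' > \<theta>)"
  define V where "V = (1 + \<beta>) ^ N / \<theta>"
  have degree: "real (card {b'\<in>words N. B b b'}) \<le> V" for b
    using card_hamming_kernel_gt[OF assms(1,2)] \<open>0 < \<theta>\<close> unfolding B_def V_def
    by (simp add: field_simps)
  have "V \<ge> 0" unfolding V_def using assms(1,2) by simp
  have refl: "B b b" for b
    unfolding B_def hamming_kernel_self using \<open>\<theta> < 1\<close> .
  have sym: "B b b' \<Longrightarrow> B b' b" for b b' unfolding B_def by (simp add: hamming_kernel_commute)
  have "real (K - 1) * V < real (card (words N :: (nat \<Rightarrow> bool) set))"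
    using count \<open>0 < \<theta>\<close> unfolding V_def by (simp add: card_PiE field_simps)
  from greedy_independent_set[OF finite_words degree \<open>V \<ge> 0\<close> refl sym this]
  obtain C where C: "C \<subseteq> words N" "card C = Suc (K - 1)" "\<forall>a\<in>C. \<forall>b\<in>C. a \<noteq> b \<longrightarrow> \<not> B a b"
    by blast
  then have "finite C" "card C = K" using finite_subset[OF _ finite_words] \<open>K \<ge> 1\<close> by auto
  then obtain h where h: "bij_betw h {0..<K} C" using ex_bij_betw_nat_finite by blast
  have "hamming_kernel \<beta> N (h m) (h m') \<le> \<theta>" if "m < K" "m' < K" "m \<noteq> m'" for m m'
  proof -
    have "h m \<in> C" "h m' \<in> C" "h m \<noteq> h m'"
      using h that by (auto simp: bij_betw_def inj_on_def)
    then show ?thesis using C(3) unfolding B_def by force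
  qed
  then show ?thesis by blast
qed

definition binary_encoding :: "'x \<Rightarrow> 'x \<Rightarrow> nat \<Rightarrow> (nat \<Rightarrow> bool) \<Rightarrow> nat \<Rightarrow> 'x" where
  "binary_encoding x x' N b = restrict (\<lambda>i. if b i then x else x') {..<N}"

lemma binary_encoding_in_words: "binary_encoding x x' N b \<in> words N"
  unfolding binary_encoding_def by simp

lemma bhattacharyya_binary_encoding_le:
  fixes W :: "'s \<Rightarrow> 'x \<Rightarrow> 'y::finite \<Rightarrow> real"
  assumes stoch: "stochastic_family W" and bh: "\<And>s. bhattacharyya (W s x) (W s x') \<le> \<beta>"
  shows "(\<Sum>y\<in>words N. sqrt (prod_channel W N y (binary_encoding x x' N b) s
                             * prod_channel W N y (binary_encoding x x' N b') s))
           \<le> hamming_kernel \<beta> N b b'"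
  unfolding bhattacharyya_prod_channel hamming_kernel_def
proof (rule prod_mono, intro conjI)
  fix i assume "i \<in> {..<N}"
  have nonneg: "W s' a t \<ge> 0" and total: "sum (W s' a) UNIV = 1" for s' a t
    using stoch unfolding stochastic_family_def by auto
  let ?c = "binary_encoding x x' N b i" and ?c' = "binary_encoding x x' N b' i"
  show "0 \<le> bhattacharyya (W (s i) ?c) (W (s i) ?c')"
    by (intro bhattacharyya_nonneg nonneg)
  show "bhattacharyya (W (s i) ?c) (W (s i) ?c') \<le> (if b i = b' i then 1 else \<beta>)"
  proof (cases "b i = b' i")
    case True
    then have "?c' = ?c" unfolding binary_encoding_def by simp
    then show ?thesis using True bhattacharyya_self[OF nonneg total] by simp
  next
    case False
    then have "bhattacharyya (W (s i) ?c) (W (s i) ?c') = bhattacharyya (W (s i) x) (W (s i) x')"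
      using \<open>i \<in> {..<N}\<close> unfolding binary_encoding_def
      by (cases "b i") (auto simp: bhattacharyya_commute)
    then show ?thesis using False bh by simp
  qed
qed

lemma nat_ceiling_inverse_bounds:
  fixes v :: real
  assumes "0 < v" "2 * v < 1"
  shows "nat \<lceil>1 / v\<rceil> \<ge> 1" "real (nat \<lceil>1 / v\<rceil>) \<ge> 1 / v"
    "real (nat \<lceil>1 / v\<rceil>) * v\<^sup>2 \<le> 2 * v" "real (nat \<lceil>1 / v\<rceil> - 1) * v ^ 4 < v\<^sup>2"
proof -
  have "1 / v > 2" using assms by (simp add: field_simps)
  moreover have ge: "real (nat \<lceil>1 / v\<rceil>) \<ge> 1 / v" by (rule real_nat_ceiling_ge)
  ultimately have le: "real (nat \<lceil>1 / v\<rceil>) \<le> 2 / v" by linarith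
  show "nat \<lceil>1 / v\<rceil> \<ge> 1" using ge \<open>1 / v > 2\<close> by linarith
  show "real (nat \<lceil>1 / v\<rceil>) \<ge> 1 / v" by (rule ge)
  show Kv2: "real (nat \<lceil>1 / v\<rceil>) * v\<^sup>2 \<le> 2 * v"
    using mult_right_mono[OF le, of "v\<^sup>2"] \<open>0 < v\<close> by (simp add: power2_eq_square)
  have "real (nat \<lceil>1 / v\<rceil> - 1) * v ^ 4 \<le> real (nat \<lceil>1 / v\<rceil>) * v\<^sup>2 * v\<^sup>2"
    using mult_right_mono[OF of_nat_mono[OF diff_le_self], of "v ^ 4" "nat \<lceil>1 / v\<rceil>" 1] \<open>0 < v\<close>
    by (simp add: power4_eq_xxxx power2_eq_square mult.assoc)
  also have "\<dots> \<le> 2 * v * v\<^sup>2" using Kv2 by (intro mult_right_mono) auto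
  also have "\<dots> < v\<^sup>2" using assms by simp
  finally show "real (nat \<lceil>1 / v\<rceil> - 1) * v ^ 4 < v\<^sup>2" .
qed

lemma exists_code_csr_max_error_le:
  fixes W :: "'s::finite \<Rightarrow> 'x \<Rightarrow> 'y::finite \<Rightarrow> real"
  assumes stoch: "stochastic_family W" and bh: "\<And>s. bhattacharyya (W s x) (W s x') \<le> \<beta>"
    and "\<beta> \<ge> 0" and "u > 0" and u4: "1 + \<beta> = 2 * u ^ 4" and small: "2 * u ^ N < 1"
  shows "\<exists>K f phi. K \<ge> 1 \<and> real K \<ge> (1/u) ^ N \<and> f ` {..<K} \<subseteq> words N \<and>
           csr_max_error W N K f phi \<le> 2 * u ^ N"
proof -
  define v where "v = u ^ N"
  have "v > 0" "2 * v < 1" using \<open>u > 0\<close> small unfolding v_def by simp_all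
  \<comment> \<open>About 1/v codewords with pairwise overlap \<theta> = v^2: the union bound gives error at most
      K \<theta> \<le> 2 v, and (1 + \<beta>)^N = 2^N v^4 leaves room for that many codewords.\<close>
  define K where "K = nat \<lceil>1 / v\<rceil>"
  define \<theta> where "\<theta> = v\<^sup>2"
  have "K \<ge> 1" and K_ge: "real K \<ge> 1 / v" and Kv2: "real K * \<theta> \<le> 2 * v"
    and room: "real (K - 1) * v ^ 4 < \<theta>"
    unfolding K_def \<theta>_def using nat_ceiling_inverse_bounds[OF \<open>v > 0\<close> \<open>2 * v < 1\<close>] by auto
  have "0 < \<theta>" "\<theta> < 1"
    using \<open>v > 0\<close> \<open>2 * v < 1\<close> unfolding \<theta>_def by (simp_all add: power_less_one_iff)
  have "(1 + \<beta>) ^ N = 2 ^ N * v ^ 4"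
    unfolding u4 v_def by (simp add: power_mult_distrib power_mult[symmetric] mult.commute)
  then have "real (K - 1) * (1 + \<beta>) ^ N < \<theta> * 2 ^ N" using room by simp
  then obtain h where h: "\<forall>m<K. \<forall>m'<K. m \<noteq> m' \<longrightarrow> hamming_kernel \<beta> N (h m) (h m') \<le> \<theta>"
    using exists_binary_code_hamming_kernel_le[OF \<open>\<beta> \<ge> 0\<close> \<open>0 < \<theta>\<close> \<open>\<theta> < 1\<close> \<open>K \<ge> 1\<close>] by blast
  define f where "f = (\<lambda>m. binary_encoding x x' N (h m))"
  define phi where "phi = (\<lambda>y s. ml_decoder (\<lambda>m y. prod_channel W N y (f m) s) K y)"
  have "csr_max_error W N K f phi \<le> real (K - 1) * \<theta>"
    unfolding phi_def
  proof (rule csr_max_error_ml_decoder_le[OF stoch \<open>K \<ge> 1\<close>])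
    fix s m m' assume "m < K" "m' < K" "m \<noteq> m'"
    then show "(\<Sum>y\<in>words N. sqrt (prod_channel W N y (f m) s * prod_channel W N y (f m') s)) \<le> \<theta>"
      unfolding f_def using h
      by (intro order_trans[OF bhattacharyya_binary_encoding_le[OF stoch bh]]) blast
  qed
  also have "\<dots> \<le> real K * \<theta>" using \<open>0 < \<theta>\<close> by (intro mult_right_mono) auto
  also have "\<dots> \<le> 2 * u ^ N" using Kv2 unfolding v_def .
  finally have "csr_max_error W N K f phi \<le> 2 * u ^ N" .
  moreover have "real K \<ge> (1/u) ^ N" using K_ge unfolding v_def power_one_over .
  moreover have "f ` {..<K} \<subseteq> words N"
    unfolding f_def by (rule image_subsetI) (rule binary_encoding_in_words)
  ultimately show ?thesis using \<open>K \<ge> 1\<close> by (intro exI[of _ K] exI[of _ f] exI[of _ phi] conjI)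
qed

lemma csr_dc_achievable_of_codes:
  assumes "0 < u" "u < 1"
    and codes: "\<And>N. 2 * u ^ N < 1 \<Longrightarrow> \<exists>K f phi. K \<ge> 1 \<and> real K \<ge> (1/u) ^ N \<and>
                 f ` {..<K} \<subseteq> words N \<and> csr_max_error W N K f phi \<le> 2 * u ^ N"
  shows "csr_dc_achievable W (log 2 (1/u))"
  unfolding csr_dc_achievable_def
proof (intro allI impI)
  fix eps :: real assume "eps > 0"
  have "(\<lambda>N. 2 * u ^ N) \<longlonglongrightarrow> 2 * 0"
    by (intro tendsto_mult_left LIMSEQ_power_zero) (use assms(1,2) in simp)
  then have "eventually (\<lambda>N. 2 * u ^ N < min 1 eps) sequentially"
    by (rule order_tendstoD) (use \<open>eps > 0\<close> in simp)
  then obtain N0 where N0: "\<And>N. N \<ge> N0 \<Longrightarrow> 2 * u ^ N < min 1 eps"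
    by (auto simp: eventually_sequentially)
  show "\<exists>N0. \<forall>N\<ge>N0. \<exists>K f phi. K \<ge> 1 \<and> f ` {..<K} \<subseteq> words N \<and>
          log 2 (1/u) - eps < log 2 (real K) / real N \<and> csr_max_error W N K f phi < eps"
  proof (rule exI[of _ "max N0 1"], intro allI impI)
    fix N assume N: "max N0 1 \<le> N"
    then have small: "2 * u ^ N < 1" and "2 * u ^ N < eps" using N0 by auto
    obtain K f phi where "K \<ge> 1" and K: "real K \<ge> (1/u) ^ N"
      and f: "f ` {..<K} \<subseteq> words N" and error: "csr_max_error W N K f phi \<le> 2 * u ^ N"
      using codes[OF small] by blast
    have "real N * log 2 (1/u) = log 2 ((1/u) ^ N)"
      using \<open>0 < u\<close> by (simp add: log_nat_power)
    also have "\<dots> \<le> log 2 (real K)"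
      using K \<open>0 < u\<close> \<open>K \<ge> 1\<close> zero_less_power[of "1/u" N] by (subst log_le_cancel_iff) auto
    finally have "log 2 (1/u) \<le> log 2 (real K) / real N"
      using N by (simp add: field_simps)
    then show "\<exists>K f phi. K \<ge> 1 \<and> f ` {..<K} \<subseteq> words N \<and>
          log 2 (1/u) - eps < log 2 (real K) / real N \<and> csr_max_error W N K f phi < eps"
      using \<open>K \<ge> 1\<close> f error \<open>2 * u ^ N < eps\<close> \<open>eps > 0\<close>
      by (intro exI[of _ K] exI[of _ f] exI[of _ phi] conjI) auto
  qed
qed

lemma achievable_rate_pos:
  fixes W :: "'s::finite \<Rightarrow> 'x \<Rightarrow> 'y::finite \<Rightarrow> real"
  assumes stoch: "stochastic_family W" and separated: "\<forall>s. W s x \<noteq> W s x'"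
  shows "\<exists>R>0. csr_dc_achievable W R"
proof -
  have nonneg: "W s a t \<ge> 0" and total: "sum (W s a) UNIV = 1" for s a t
    using stoch unfolding stochastic_family_def by auto
  define \<beta> where "\<beta> = Max (range (\<lambda>s. bhattacharyya (W s x) (W s x')))"
  have bh: "bhattacharyya (W s x) (W s x') \<le> \<beta>" for s unfolding \<beta>_def by simp
  have "\<beta> \<in> range (\<lambda>s. bhattacharyya (W s x) (W s x'))" unfolding \<beta>_def by (rule Max_in) auto
  then have "\<beta> < 1" using bhattacharyya_less_one[OF nonneg nonneg total total] separated by auto
  have "\<beta> \<ge> 0" by (rule order_trans[OF bhattacharyya_nonneg bh]) (rule nonneg)+
  define u where "u = ((1 + \<beta>) / 2) powr (1/4)"
  have "0 < u" "u < 1"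
    unfolding u_def using \<open>\<beta> \<ge> 0\<close> \<open>\<beta> < 1\<close> powr_less_mono2[of "1/4" "(1 + \<beta>) / 2" 1] by simp_all
  have "1 + \<beta> = 2 * u ^ 4" unfolding u_def using \<open>\<beta> \<ge> 0\<close> by (simp add: powr_power)
  then have "csr_dc_achievable W (log 2 (1/u))"
    using exists_code_csr_max_error_le[OF stoch bh \<open>\<beta> \<ge> 0\<close> \<open>0 < u\<close>]
    by (intro csr_dc_achievable_of_codes[OF \<open>0 < u\<close> \<open>u < 1\<close>])
  moreover have "log 2 (1/u) > 0" using \<open>0 < u\<close> \<open>u < 1\<close> by simp
  ultimately show ?thesis by blast
qed

theorem proposition2:
  fixes W :: "'s::finite \<Rightarrow> 'x::finite \<Rightarrow> 'y::finite \<Rightarrow> real"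
  assumes "stochastic_family W"
  shows "C_CSR_DC W > 0 \<longleftrightarrow>
         (\<exists>x x'. \<forall>s. \<exists>y. W s x y \<noteq> W s x' y)"
proof
  assume "C_CSR_DC W > 0"
  show "\<exists>x x'. \<forall>s. \<exists>y. W s x y \<noteq> W s x' y"
  proof (rule ccontr)
    assume "\<nexists>x x'. \<forall>s. \<exists>y. W s x y \<noteq> W s x' y"
    then have "\<forall>x x'. \<exists>s. W s x = W s x'" by (auto simp: fun_eq_iff)
    then have "C_CSR_DC W \<le> 0"
      unfolding C_CSR_DC_def using achievable_rate_nonpos[OF assms] by (auto intro!: Sup_least)
    with \<open>C_CSR_DC W > 0\<close> show False by simp
  qed
next
  assume "\<exists>x x'. \<forall>s. \<exists>y. W s x y \<noteq> W s x' y"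
  then obtain x x' where "\<forall>s. W s x \<noteq> W s x'" by metis
  then obtain R where "R > 0" "csr_dc_achievable W R" using achievable_rate_pos[OF assms] by blast
  then have "ereal R \<le> C_CSR_DC W" unfolding C_CSR_DC_def by (intro Sup_upper) auto
  with \<open>R > 0\<close> show "C_CSR_DC W > 0" using less_le_trans[of 0 "ereal R"] by simp
qed

end
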